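(* Let $X$ have a pdf $f$ satisfying Conditions (A) and (B) below, and let $D>0$. Let $H^*(D)=\inf\{H[Q(X)]: D(Q)\le D\}$ and $A^*(D)=\inf\{\mathrm{AoI}(S_{\mathrm z},Q,F^* ): D(Q)\le D\}$, both infima taken over quantizers. Then $$\tfrac32 H^*(D)\le A^*(D),$$ and, for any $\delta>0$ with $D(Q_{\mathrm{uni}}^\delta)\le D$, $$A^*(D)\le \mathrm{AoI}(S_{\mathrm z},Q_{\mathrm{uni}}^\delta,F_{\mathrm s}).$$
   Context: Let $X$ be a real random variable with pdf $f$. Condition (A): $f$ is continuous and differentiable, and its support is a bounded interval $I$. Condition (B): $\int_I f\log_2^2 f\,dx$ and $-\int_I f\log_2 f\,dx$ exist and are finite. Quantizers. A quantizer $Q$ partitions $I$ into intervals $[a_{i-1},a_i]$ with representation points $c_i$. Write $p_i=P(X\in[a_{i-1},a_i])$. The output entropy is $H[Q(X)]=-\sum_ip_i\log_2p_i$, and the distortion is $D(Q)=\sum_i\int_{a_{i-1}}^{a_i}(x-c_i)^2f(x)\,dx$. The uniform quantizer $Q_{\mathrm{uni}}^\delta$ partitions $I$ into consecutive cells of length $\delta$, with midpoint representation points. Codes. A real-valued code assigns lengths $l_i\in\mathbb R^+$ to the cells, subject to $\sum_i2^{-l_i}\le1$. The random codeword length is $L=l_i$ when $X$ is in cell $i$. Objective. Under zero-wait sampling, $\mathrm{AoI}(S_{\mathrm z},Q,l)=\frac{E[L^2]}{2E[L]}+E[L]$, and $\mathrm{AoI}(S_{\mathrm z},Q,F^* )=\inf_l\mathrm{AoI}(S_{\mathrm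 z},Q,l)$, the infimum over real-valued codes. $F_{\mathrm s}$ denotes the real-valued Shannon code $l_i=-\log_2p_i$. *)

theory Defs
  imports "HOL-Analysis.Analysis"
begin

text \<open>A quantizer of the support interval [alpha, beta] with n cells is given by
  breakpoints a 0 = alpha < a 1 < ... < a n = beta; cell i (for i < n) is
  [a i, a (i+1)] with representation point c i.\<close>

definition is_quantizer :: "real \<Rightarrow> real \<Rightarrow> nat \<Rightarrow> (nat \<Rightarrow> real) \<Rightarrow> bool" where
  "is_quantizer alpha beta n a \<longleftrightarrow>
     n \<ge> 1 \<and> a 0 = alpha \<and> a n = beta \<and> (\<forall>i<n. a i < a (Suc i))"

definition cell_prob :: "(real \<Rightarrow> real) \<Rightarrow> (nat \<Rightarrow> real) \<Rightarrow> nat \<Rightarrow> real" where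
  "cell_prob f a i = integral {a i..a (Suc i)} f"

definition out_entropy :: "(real \<Rightarrow> real) \<Rightarrow> nat \<Rightarrow> (nat \<Rightarrow> real) \<Rightarrow> real" where
  "out_entropy f n a = - (\<Sum>i<n. cell_prob f a i * log 2 (cell_prob f a i))"

definition distortion :: "(real \<Rightarrow> real) \<Rightarrow> nat \<Rightarrow> (nat \<Rightarrow> real) \<Rightarrow> (nat \<Rightarrow> real) \<Rightarrow> real" where
  "distortion f n a c = (\<Sum>i<n. integral {a i..a (Suc i)} (\<lambda>x. (x - c i)^2 * f x))"

definition EL :: "(real \<Rightarrow> real) \<Rightarrow> nat \<Rightarrow> (nat \<Rightarrow> real) \<Rightarrow> (nat \<Rightarrow> real) \<Rightarrow> real" where
  "EL f n a l = (\<Sum>i<n. cell_prob f a i * l i)"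

definition EL2 :: "(real \<Rightarrow> real) \<Rightarrow> nat \<Rightarrow> (nat \<Rightarrow> real) \<Rightarrow> (nat \<Rightarrow> real) \<Rightarrow> real" where
  "EL2 f n a l = (\<Sum>i<n. cell_prob f a i * (l i)^2)"

definition aoi :: "(real \<Rightarrow> real) \<Rightarrow> nat \<Rightarrow> (nat \<Rightarrow> real) \<Rightarrow> (nat \<Rightarrow> real) \<Rightarrow> real" where
  "aoi f n a l = EL2 f n a l / (2 * EL f n a l) + EL f n a l"

definition real_code :: "nat \<Rightarrow> (nat \<Rightarrow> real) \<Rightarrow> bool" where
  "real_code n l \<longleftrightarrow> (\<forall>i<n. l i > 0) \<and> (\<Sum>i<n. 2 powr (- l i)) \<le> 1"

definition aoi_opt :: "(real \<Rightarrow> real) \<Rightarrow> nat \<Rightarrow> (nat \<Rightarrow> real) \<Rightarrow> real" where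
  "aoi_opt f n a = Inf {aoi f n a l | l. real_code n l}"

definition shannon_code :: "(real \<Rightarrow> real) \<Rightarrow> (nat \<Rightarrow> real) \<Rightarrow> nat \<Rightarrow> real" where
  "shannon_code f a i = - log 2 (cell_prob f a i)"

definition H_star :: "(real \<Rightarrow> real) \<Rightarrow> real \<Rightarrow> real \<Rightarrow> real \<Rightarrow> real" where
  "H_star f alpha beta D = Inf {out_entropy f n a | n a c.
      is_quantizer alpha beta n a \<and> distortion f n a c \<le> D}"

definition A_star :: "(real \<Rightarrow> real) \<Rightarrow> real \<Rightarrow> real \<Rightarrow> real \<Rightarrow> real" where
  "A_star f alpha beta D = Inf {aoi_opt f n a | n a c.
      is_quantizer alpha beta n a \<and> distortion f n a c \<le> D}"

definition uni_n :: "real \<Rightarrow> real \<Rightarrow> real \<Rightarrow> nat" where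
  "uni_n alpha beta delta = nat \<lceil>(beta - alpha) / delta\<rceil>"

definition uni_a :: "real \<Rightarrow> real \<Rightarrow> real \<Rightarrow> nat \<Rightarrow> real" where
  "uni_a alpha beta delta i = min (alpha + real i * delta) beta"

definition uni_c :: "real \<Rightarrow> real \<Rightarrow> real \<Rightarrow> nat \<Rightarrow> real" where
  "uni_c alpha beta delta i = (uni_a alpha beta delta i + uni_a alpha beta delta (Suc i)) / 2"

end

theory Submission
  imports Defs
begin

text \<open>For any probability vector p and lengths l obeying Kraft's inequality, Gibbs'
  inequality gives H(p) \<le> E[L], and Jensen gives E[L^2] \<ge> E[L]^2, so
  E[L^2]/(2 E[L]) + E[L] \<ge> 3/2 E[L] \<ge> 3/2 H(p). Applied to the cell probabilities of
  every admissible quantizer this yields the lower bound. For the upper bound, the uniform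
  quantizer is admissible, all its cells have positive probability because f has full support,
  and the Shannon lengths -log p_i then form a real-valued code.\<close>

definition prob_vector :: "nat \<Rightarrow> (nat \<Rightarrow> real) \<Rightarrow> bool" where
  "prob_vector n p \<longleftrightarrow> (\<forall>i<n. 0 \<le> p i) \<and> (\<Sum>i<n. p i) = 1"

lemma prob_vector_nonempty: "prob_vector n p \<Longrightarrow> n \<noteq> 0"
  by (cases n) (auto simp: prob_vector_def)

lemma prob_vector_le_one:
  assumes "prob_vector n p" "i < n"
  shows "p i \<le> 1"
proof -
  have "p i \<le> (\<Sum>i<n. p i)"
    by (rule member_le_sum) (use assms in \<open>auto simp: prob_vector_def\<close>)
  then show ?thesis using assms by (simp add: prob_vector_def)
qed

lemma entropy_nonneg:
  assumes "prob_vector n p"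
  shows "0 \<le> - (\<Sum>i<n. p i * log 2 (p i))"
proof -
  have "p i * log 2 (p i) \<le> 0" if "i < n" for i
  proof (cases "p i = 0")
    case False
    then have "0 < p i" using assms that by (simp add: prob_vector_def order_le_neq_trans)
    then show ?thesis
      using prob_vector_le_one[OF assms that] by (simp add: mult_nonneg_nonpos)
  qed simp
  then show ?thesis using sum_nonpos[of "{..<n}" "\<lambda>i. p i * log 2 (p i)"] by simp
qed

lemma weighted_log_ratio_ge:
  fixes p l :: real
  assumes "0 \<le> p"
  shows "(p - 2 powr (- l)) / ln 2 \<le> p * l + p * log 2 p"
proof (cases "p = 0")
  case False
  with assms have p: "p > 0" by simp
  define x where "x = p * 2 powr l"
  have x: "x > 0" using p by (simp add: x_def)
  have "1 - 1/x \<le> ln x"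
    using ln_le_minus_one[of "1/x"] x by (simp add: ln_div)
  then have "p * (1 - 1/x) / ln 2 \<le> p * ln x / ln 2"
    using p by (simp add: divide_right_mono)
  moreover have "p * (1 - 1/x) = p - 2 powr (- l)"
    using p by (simp add: x_def field_simps powr_minus)
  moreover have "p * ln x / ln 2 = p * l + p * log 2 p"
    using p by (simp add: x_def log_def ln_mult field_simps)
  ultimately show ?thesis by simp
qed simp

lemma entropy_le_expected_length:
  assumes p: "prob_vector n p" and kraft: "(\<Sum>i<n. 2 powr (- l i)) \<le> 1"
  shows "- (\<Sum>i<n. p i * log 2 (p i)) \<le> (\<Sum>i<n. p i * l i)"
proof -
  have "0 \<le> (1 - (\<Sum>i<n. 2 powr (- l i))) / ln 2"
    using kraft by simp
  also have "\<dots> = (\<Sum>i<n. (p i - 2 powr (- l i)) / ln 2)"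
    using p by (simp add: prob_vector_def sum_divide_distrib[symmetric] sum_subtractf)
  also have "\<dots> \<le> (\<Sum>i<n. p i * l i + p i * log 2 (p i))"
    using p by (intro sum_mono weighted_log_ratio_ge) (simp add: prob_vector_def)
  finally show ?thesis by (simp add: sum.distrib)
qed

lemma square_mean_le_mean_square:
  assumes p: "prob_vector n p"
  shows "(\<Sum>i<n. p i * l i)^2 \<le> (\<Sum>i<n. p i * (l i)^2)"
  using convex_on_sum[OF _ _ convex_power2, of "{..<n}" p l] p prob_vector_nonempty[OF p]
  by (simp add: prob_vector_def lessThan_empty_iff)

lemma EL_pos:
  assumes p: "prob_vector n (cell_prob f a)" and l: "real_code n l"
  shows "0 < EL f n a l"
proof -
  have "(\<Sum>i<n. cell_prob f a i) \<noteq> 0" using p by (simp add: prob_vector_def)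
  then obtain j where "j < n" "cell_prob f a j \<noteq> 0"
    by (auto elim: sum.not_neutral_contains_not_neutral)
  with p have j: "j < n" "0 < cell_prob f a j"
    by (auto simp: prob_vector_def order_le_neq_trans)
  have "0 < cell_prob f a j * l j" using j l by (simp add: real_code_def)
  also have "\<dots> \<le> EL f n a l"
    unfolding EL_def
    by (rule member_le_sum) (use j p l in \<open>auto simp: prob_vector_def real_code_def less_imp_le\<close>)
  finally show ?thesis .
qed

lemma aoi_ge_three_halves_EL:
  assumes p: "prob_vector n (cell_prob f a)" and pos: "0 < EL f n a l"
  shows "3/2 * EL f n a l \<le> aoi f n a l"
proof -
  have "(EL f n a l)^2 \<le> EL2 f n a l"
    using square_mean_le_mean_square[OF p] by (simp add: EL_def EL2_def)
  then have "(EL f n a l)^2 / (2 * EL f n a l) \<le> EL2 f n a l / (2 * EL f n a l)"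
    using pos by (intro divide_right_mono) auto
  then show ?thesis using pos by (simp add: aoi_def power2_eq_square)
qed

lemma aoi_ge_entropy:
  assumes p: "prob_vector n (cell_prob f a)" and l: "real_code n l"
  shows "3/2 * out_entropy f n a \<le> aoi f n a l"
proof -
  have "out_entropy f n a \<le> EL f n a l"
    using entropy_le_expected_length[OF p] l
    by (simp add: out_entropy_def EL_def real_code_def)
  then show ?thesis using aoi_ge_three_halves_EL[OF p EL_pos[OF p l]] by simp
qed

lemma real_code_const:
  assumes "n \<noteq> 0"
  shows "real_code n (\<lambda>_. real n)"
proof -
  have "(\<Sum>i<n. 2 powr (- real n)) = real n / 2 ^ n"
    by (simp add: powr_minus powr_realpow divide_inverse)
  also have "\<dots> \<le> 1"
    using less_exp[of n] by (simp add: less_imp_le)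
  finally show ?thesis using assms by (simp add: real_code_def)
qed

lemma bdd_below_aoi_codes:
  assumes "prob_vector n (cell_prob f a)"
  shows "bdd_below {aoi f n a l | l. real_code n l}"
proof (rule bdd_belowI)
  fix x assume "x \<in> {aoi f n a l | l. real_code n l}"
  then show "0 \<le> x"
    using aoi_ge_entropy entropy_nonneg[OF assms] assms
    by (fastforce simp: out_entropy_def)
qed

lemma aoi_opt_le:
  assumes "prob_vector n (cell_prob f a)" "real_code n l"
  shows "aoi_opt f n a \<le> aoi f n a l"
  unfolding aoi_opt_def
  by (rule cInf_lower[OF _ bdd_below_aoi_codes[OF assms(1)]]) (use assms(2) in blast)

lemma aoi_opt_ge_entropy:
  assumes p: "prob_vector n (cell_prob f a)"
  shows "3/2 * out_entropy f n a \<le> aoi_opt f n a"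
  unfolding aoi_opt_def
  using real_code_const[OF prob_vector_nonempty[OF p]] aoi_ge_entropy[OF p]
  by (intro cInf_greatest) auto

lemma aoi_opt_single_cell_nonpos:
  assumes p: "prob_vector 1 (cell_prob f a)"
  shows "aoi_opt f 1 a \<le> 0"
proof (rule field_le_epsilon)
  fix e :: real assume e: "0 < e"
  have "2 powr (- (2/3 * e)) \<le> 2 powr 0"
    using e by (intro powr_mono) auto
  then have "real_code 1 (\<lambda>_. 2/3 * e)"
    using e by (simp add: real_code_def)
  then have "aoi_opt f 1 a \<le> aoi f 1 a (\<lambda>_. 2/3 * e)"
    by (rule aoi_opt_le[OF p])
  also have "\<dots> = 0 + e"
    using p e by (simp add: prob_vector_def aoi_def EL_def EL2_def power2_eq_square)
  finally show "aoi_opt f 1 a \<le> 0 + e" .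
qed

lemma real_code_shannon:
  assumes p: "prob_vector n (cell_prob f a)" and pos: "\<forall>i<n. 0 < cell_prob f a i"
    and n: "2 \<le> n"
  shows "real_code n (shannon_code f a)"
proof -
  have "cell_prob f a i < 1" if i: "i < n" for i
  proof -
    define j where "j = (if i = 0 then 1 else (0::nat))"
    have j: "j < n" "j \<noteq> i" using n by (auto simp: j_def)
    have "cell_prob f a i + cell_prob f a j = (\<Sum>k\<in>{i,j}. cell_prob f a k)"
      using j by simp
    also have "\<dots> \<le> (\<Sum>k<n. cell_prob f a k)"
      by (rule sum_mono2) (use i j pos in \<open>auto intro: less_imp_le\<close>)
    finally show ?thesis
      using pos[rule_format, OF j(1)] p by (simp add: prob_vector_def)
  qed
  moreover have "(\<Sum>i<n. 2 powr (- shannon_code f a i)) = (\<Sum>i<n. cell_prob f a i)"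
    using pos by (intro sum.cong) (simp_all add: shannon_code_def)
  ultimately show ?thesis
    using p pos by (simp add: real_code_def shannon_code_def prob_vector_def)
qed

lemma aoi_opt_le_shannon:
  assumes p: "prob_vector n (cell_prob f a)" and pos: "\<forall>i<n. 0 < cell_prob f a i"
  shows "aoi_opt f n a \<le> aoi f n a (shannon_code f a)"
proof (cases "n = 1")
  case True
  \<comment> \<open>The only Shannon length is -log 2 1 = 0, which is not a real code; the AoI formula
    then evaluates to 0/0 + 0 = 0, and the infimum over real codes is 0 as well.\<close>
  have "aoi f n a (shannon_code f a) = 0"
    using p True by (simp add: prob_vector_def aoi_def EL_def EL2_def shannon_code_def)
  then show ?thesis using aoi_opt_single_cell_nonpos p True by simp
next
  case False
  then have "2 \<le> n" using prob_vector_nonempty[OF p] by simp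
  then show ?thesis by (intro aoi_opt_le p real_code_shannon pos)
qed

lemma quantizer_mono:
  assumes q: "is_quantizer alpha beta n a" and "i \<le> j" "j \<le> n"
  shows "a i \<le> a j"
proof (rule lift_Suc_mono_le_ivl[of "{..<n}"])
  show "a k \<le> a (Suc k)" if "k \<in> {..<n}" for k
    using q that by (simp add: is_quantizer_def less_imp_le)
  show "{i..<j} \<subseteq> {..<n}" using \<open>j \<le> n\<close> by auto
qed fact

lemma quantizer_cell_subset:
  assumes q: "is_quantizer alpha beta n a" and i: "i < n"
  shows "{a i..a (Suc i)} \<subseteq> {alpha..beta}"
  using quantizer_mono[OF q, of 0 i] quantizer_mono[OF q, of "Suc i" n] q i
  by (auto simp: is_quantizer_def)

lemma sum_integral_consecutive:
  fixes f :: "real \<Rightarrow> real" and a :: "nat \<Rightarrow> real"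
  assumes mono: "\<forall>i<m. a i \<le> a (Suc i)" and f: "f integrable_on {a 0..a m}"
  shows "(\<Sum>i<m. integral {a i..a (Suc i)} f) = integral {a 0..a m} f"
  using assms
proof (induction m)
  case (Suc m)
  have le: "a 0 \<le> a m" "a m \<le> a (Suc m)"
    using Suc.prems(1) by (auto intro!: lift_Suc_mono_le_ivl[of "{..<Suc m}" a 0 m])
  then have "f integrable_on {a 0..a m}"
    by (intro integrable_on_subinterval[OF Suc.prems(2)]) auto
  then have "(\<Sum>i<m. integral {a i..a (Suc i)} f) = integral {a 0..a m} f"
    using Suc by simp
  then show ?case
    using Henstock_Kurzweil_Integration.integral_combine[OF le Suc.prems(2)] by simp
qed simp

lemma prob_vector_cell_prob:
  assumes q: "is_quantizer alpha beta n a" and nonneg: "\<forall>x. 0 \<le> f x"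
    and f: "f integrable_on {alpha..beta}" and total: "integral {alpha..beta} f = 1"
  shows "prob_vector n (cell_prob f a)"
proof -
  have "0 \<le> cell_prob f a i" if "i < n" for i
    unfolding cell_prob_def
    using nonneg integrable_on_subinterval[OF f quantizer_cell_subset[OF q that]]
    by (intro integral_nonneg) auto
  moreover have "(\<Sum>i<n. cell_prob f a i) = 1"
    using sum_integral_consecutive[of n a f] q f total
    by (simp add: is_quantizer_def cell_prob_def less_imp_le)
  ultimately show ?thesis by (simp add: prob_vector_def)
qed

lemma cell_prob_pos:
  assumes q: "is_quantizer alpha beta n a" and i: "i < n" and nonneg: "\<forall>x. 0 \<le> f x"
    and cont: "continuous_on {alpha..beta} f"
    and support: "closure {x. f x \<noteq> 0} = {alpha..beta}"
  shows "0 < cell_prob f a i"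
proof -
  let ?u = "a i" and ?v = "a (Suc i)"
  have cell: "{?u..?v} \<subseteq> {alpha..beta}" "?u < ?v"
    using quantizer_cell_subset[OF q i] q i by (auto simp: is_quantizer_def)
  have "\<not> {x. f x \<noteq> 0} \<subseteq> - {?u<..<?v}"
  proof
    assume "{x. f x \<noteq> 0} \<subseteq> - {?u<..<?v}"
    moreover have "closed (- {?u<..<?v})" by (intro closed_Compl open_greaterThanLessThan)
    ultimately have "{?u..?v} \<subseteq> - {?u<..<?v}"
      using support closure_minimal cell(1) by blast
    moreover obtain z where "?u < z" "z < ?v" using dense[OF cell(2)] by blast
    ultimately show False using subsetD[of "{?u..?v}" "- {?u<..<?v}" z] by simp
  qed
  then obtain y where "y \<in> {?u..?v}" "f y \<noteq> 0" by (fastforce intro: less_imp_le)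
  moreover have "integral {?u..?v} f = 0 \<longleftrightarrow> (\<forall>x \<in> {?u..?v}. f x = 0)"
    using integral_cbox_eq_0_iff[of ?u ?v f] continuous_on_subset[OF cont cell(1)] cell(2) nonneg
    by simp
  moreover have "0 \<le> integral {?u..?v} f"
    using nonneg integrable_continuous_interval[OF continuous_on_subset[OF cont cell(1)]]
    by (intro integral_nonneg) auto
  ultimately show ?thesis by (auto simp: cell_prob_def)
qed

lemma distortion_le_mesh_square:
  assumes q: "is_quantizer alpha beta n a" and nonneg: "\<forall>x. 0 \<le> f x"
    and cont: "continuous_on {alpha..beta} f" and total: "integral {alpha..beta} f = 1"
    and mesh: "\<forall>i<n. a (Suc i) - a i \<le> w" and c: "\<forall>i<n. c i \<in> {a i..a (Suc i)}"
  shows "distortion f n a c \<le> w^2"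
proof -
  have "integral {a i..a (Suc i)} (\<lambda>x. (x - c i)^2 * f x) \<le> integral {a i..a (Suc i)} (\<lambda>x. w^2 * f x)"
    if i: "i < n" for i
  proof (rule integral_le)
    have fi: "continuous_on {a i..a (Suc i)} f"
      using continuous_on_subset[OF cont quantizer_cell_subset[OF q i]] .
    show "(\<lambda>x. (x - c i)^2 * f x) integrable_on {a i..a (Suc i)}"
      "(\<lambda>x. w^2 * f x) integrable_on {a i..a (Suc i)}"
      by (intro integrable_continuous_interval continuous_intros fi)+
    fix x assume "x \<in> {a i..a (Suc i)}"
    then have "\<bar>x - c i\<bar> \<le> w"
      using c[rule_format, OF i] mesh[rule_format, OF i] by (auto simp: abs_le_iff)
    then have "(x - c i)^2 \<le> w^2"
      using power_mono[of "\<bar>x - c i\<bar>" w 2] by simp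
    then show "(x - c i)^2 * f x \<le> w^2 * f x" using nonneg by (simp add: mult_right_mono)
  qed
  then have "distortion f n a c \<le> w^2 * (\<Sum>i<n. cell_prob f a i)"
    unfolding distortion_def cell_prob_def sum_distrib_left by (intro sum_mono) simp
  also have "\<dots> = w^2"
    using prob_vector_cell_prob[OF q nonneg integrable_continuous_interval[OF cont] total]
    by (simp add: prob_vector_def)
  finally show ?thesis .
qed

lemma uniform_is_quantizer:
  assumes I: "alpha < beta" and d: "0 < delta"
  shows "is_quantizer alpha beta (uni_n alpha beta delta) (uni_a alpha beta delta)"
proof -
  define r where "r = (beta - alpha) / delta"
  have r: "0 < r" using I d by (simp add: r_def)
  then have n: "1 \<le> nat \<lceil>r\<rceil>" by linarith
  have "r \<le> real (nat \<lceil>r\<rceil>)" by linarith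
  then have "beta - alpha \<le> real (nat \<lceil>r\<rceil>) * delta"
    using d by (simp add: r_def field_simps)
  moreover have "alpha + real i * delta < beta" if "i < nat \<lceil>r\<rceil>" for i
  proof -
    have "real i < r" using that by linarith
    then show ?thesis using d by (simp add: r_def field_simps)
  qed
  ultimately show ?thesis
    using n I d by (auto simp: is_quantizer_def uni_n_def uni_a_def r_def[symmetric] algebra_simps)
qed

lemma uniform_cell_width:
  assumes "0 \<le> delta"
  shows "uni_a alpha beta delta (Suc i) - uni_a alpha beta delta i \<le> delta"
  using assms by (simp add: uni_a_def algebra_simps)

lemma exists_quantizer_distortion_le:
  assumes I: "alpha < beta" and nonneg: "\<forall>x. 0 \<le> f x"
    and cont: "continuous_on {alpha..beta} f" and total: "integral {alpha..beta} f = 1"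
    and D: "0 < D"
  shows "\<exists>n a c. is_quantizer alpha beta n a \<and> distortion f n a c \<le> D"
proof -
  let ?n = "uni_n alpha beta (sqrt D)" and ?a = "uni_a alpha beta (sqrt D)"
  have q: "is_quantizer alpha beta ?n ?a"
    using uniform_is_quantizer[OF I] D by simp
  have "distortion f ?n ?a ?a \<le> (sqrt D)^2"
    using q D uniform_cell_width[of "sqrt D" alpha beta]
    by (intro distortion_le_mesh_square[OF q nonneg cont total])
      (auto simp: is_quantizer_def less_imp_le)
  then show ?thesis using q D by auto
qed

lemma H_star_le_out_entropy:
  assumes nonneg: "\<forall>x. 0 \<le> f x" and cont: "continuous_on {alpha..beta} f"
    and total: "integral {alpha..beta} f = 1"
    and q: "is_quantizer alpha beta n a" and dist: "distortion f n a c \<le> D"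
  shows "H_star f alpha beta D \<le> out_entropy f n a"
proof -
  have "0 \<le> out_entropy f n a" if "is_quantizer alpha beta n a" for n a
    using entropy_nonneg[OF prob_vector_cell_prob[OF that nonneg integrable_continuous_interval[OF cont] total]]
    by (simp add: out_entropy_def)
  then have "bdd_below {out_entropy f n a | n a c. is_quantizer alpha beta n a \<and> distortion f n a c \<le> D}"
    by (intro bdd_belowI[of _ 0]) blast
  then show ?thesis
    unfolding H_star_def by (rule cInf_lower[rotated]) (use q dist in blast)
qed

lemma A_star_le_aoi_opt:
  assumes nonneg: "\<forall>x. 0 \<le> f x" and cont: "continuous_on {alpha..beta} f"
    and total: "integral {alpha..beta} f = 1"
    and q: "is_quantizer alpha beta n a" and dist: "distortion f n a c \<le> D"
  shows "A_star f alpha beta D \<le> aoi_opt f n a"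
proof -
  have "0 \<le> aoi_opt f n a" if "is_quantizer alpha beta n a" for n a
  proof -
    note pv = prob_vector_cell_prob[OF that nonneg integrable_continuous_interval[OF cont] total]
    show ?thesis
      using entropy_nonneg[OF pv] aoi_opt_ge_entropy[OF pv] by (simp add: out_entropy_def)
  qed
  then have "bdd_below {aoi_opt f n a | n a c. is_quantizer alpha beta n a \<and> distortion f n a c \<le> D}"
    by (intro bdd_belowI[of _ 0]) blast
  then show ?thesis
    unfolding A_star_def by (rule cInf_lower[rotated]) (use q dist in blast)
qed

lemma three_halves_H_star_le_A_star:
  assumes I: "alpha < beta" and nonneg: "\<forall>x. 0 \<le> f x"
    and cont: "continuous_on {alpha..beta} f" and total: "integral {alpha..beta} f = 1"
    and D: "0 < D"
  shows "3/2 * H_star f alpha beta D \<le> A_star f alpha beta D"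
  unfolding A_star_def
proof (rule cInf_greatest)
  show "{aoi_opt f n a | n a c. is_quantizer alpha beta n a \<and> distortion f n a c \<le> D} \<noteq> {}"
    using exists_quantizer_distortion_le[OF I nonneg cont total D] by blast
  fix x assume "x \<in> {aoi_opt f n a | n a c. is_quantizer alpha beta n a \<and> distortion f n a c \<le> D}"
  then obtain n a c where q: "is_quantizer alpha beta n a" "distortion f n a c \<le> D"
    and x: "x = aoi_opt f n a"
    by blast
  have "3/2 * H_star f alpha beta D \<le> 3/2 * out_entropy f n a"
    using H_star_le_out_entropy[OF nonneg cont total q] by simp
  also have "\<dots> \<le> x"
    using aoi_opt_ge_entropy[OF prob_vector_cell_prob[OF q(1) nonneg integrable_continuous_interval[OF cont] total]] x
    by simp
  finally show "3/2 * H_star f alpha beta D \<le> x" .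
qed

theorem lemma2:
  fixes f :: "real \<Rightarrow> real" and alpha beta D :: real
  assumes I: "alpha < beta"
    and pdf_nonneg: "\<forall>x. f x \<ge> 0"
    and pdf_int: "integral {alpha..beta} f = 1"
    and outside: "\<forall>x. x \<notin> {alpha..beta} \<longrightarrow> f x = 0"
    and support: "closure {x. f x \<noteq> 0} = {alpha..beta}"
    and cont: "continuous_on {alpha..beta} f"
    and diff: "\<forall>x\<in>{alpha<..<beta}. f differentiable (at x)"
    and B1: "(\<lambda>x. f x * (log 2 (f x))^2) integrable_on {alpha..beta}"
    and B2: "(\<lambda>x. f x * log 2 (f x)) integrable_on {alpha..beta}"
    and D: "D > 0"
  shows "3/2 * H_star f alpha beta D \<le> A_star f alpha beta D \<and>
    (\<forall>delta>0. distortion f (uni_n alpha beta delta) (uni_a alpha beta delta) (uni_c alpha beta delta) \<le> D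
       \<longrightarrow> A_star f alpha beta D \<le>
           aoi f (uni_n alpha beta delta) (uni_a alpha beta delta) (shannon_code f (uni_a alpha beta delta)))"
proof (intro conjI allI impI)
  show "3/2 * H_star f alpha beta D \<le> A_star f alpha beta D"
    using three_halves_H_star_le_A_star[OF I pdf_nonneg cont pdf_int D] .
  fix delta :: real
  assume "0 < delta"
    and dist: "distortion f (uni_n alpha beta delta) (uni_a alpha beta delta) (uni_c alpha beta delta) \<le> D"
  note q = uniform_is_quantizer[OF I \<open>0 < delta\<close>]
  have "A_star f alpha beta D \<le> aoi_opt f (uni_n alpha beta delta) (uni_a alpha beta delta)"
    using A_star_le_aoi_opt[OF pdf_nonneg cont pdf_int q dist] .
  also have "\<dots> \<le> aoi f (uni_n alpha beta delta) (uni_a alpha beta delta) (shannon_code f (uni_a alpha beta delta))"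
    using prob_vector_cell_prob[OF q pdf_nonneg integrable_continuous_interval[OF cont] pdf_int]
      cell_prob_pos[OF q _ pdf_nonneg cont support]
    by (intro aoi_opt_le_shannon) auto
  finally show "A_star f alpha beta D \<le> aoi f (uni_n alpha beta delta) (uni_a alpha beta delta)
      (shannon_code f (uni_a alpha beta delta))" .
qed

end
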